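(* Let $\tau$ be a transportation cost. There exists a constant $\lambda>0$ (depending on $\tau$) such that $d_\tau(\mu_+,\mu_-)\ge\lambda\,W_1(\mu_+,\mu_-)$ for all probability measures $\mu_+,\mu_-$ on $\mathbb{R}^n$.
   Context: Transportation cost: $\tau:[0,\infty)\to[0,\infty)$, $\tau(0)=0$, $\tau(w)>0$ for $w>0$, non-decreasing, subadditive, lower semi-continuous. $W_1(\mu_+,\mu_-)=\sup\{\int f\,d(\mu_+-\mu_-): f\text{ 1-Lipschitz}\}$. A discrete finite mass is $\sum_{i=1}^ka_i\delta_{x_i}$, $a_i>0$. A discrete mass flux $G$ between discrete finite masses $\nu_+,\nu_-$ of equal mass is a finite weighted directed graph with straight oriented edges $e$ (initial point $e^+$, final point $e^-$), weights $w(e)\ge0$ and $\nu_+(\{v\})+\sum_{e^-=v}w(e)=\nu_-(\{v\})+\sum_{e^+=v}w(e)$ for all $v\in V(G)\cup\operatorname{spt}\nu_\pm$; flux $\mathcal F_G=\sum_ew(e)\hat e\,\mathcal H^1\llcorner e$, $\hat e=(e^--e^+)/|e^--e^+|$; cost $J^\tau(G)=\sum_e\tau(w(e))\ell(e)$. For an $\mathbb{R}^n$-valued finite Borel measure $\mathcal F$, $J^{\tau,\mu_+,\mu_-}[\mathcal F]$ is the infimum of $\liminf_kJ^\tau(G_k)$ over sequences of discrete finite masses $\mu^k_\pm\rightharpoonup^*\mu_\pm$ and discrete mass fluxes $G_k$ between $\mu_+^k,\mu_-^k$ with $\mathcal F_{G_k}\rightharpoonup^*\mathcal F$ ($+\infty$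 if none); the cost distance is $d_\tau(\mu_+,\mu_-)=\inf_{\mathcal F}J^{\tau,\mu_+,\mu_-}[\mathcal F]$. *)

theory Defs
  imports "HOL-Probability.Probability"
begin

definition transportation_cost :: "(real \<Rightarrow> real) \<Rightarrow> bool" where
  "transportation_cost \<tau> \<longleftrightarrow>
     (\<forall>w\<ge>0. \<tau> w \<ge> 0) \<and>
     \<tau> 0 = 0 \<and>
     (\<forall>w>0. \<tau> w > 0) \<and>
     (\<forall>v w. 0 \<le> v \<longrightarrow> v \<le> w \<longrightarrow> \<tau> v \<le> \<tau> w) \<and>
     (\<forall>v w. 0 \<le> v \<longrightarrow> 0 \<le> w \<longrightarrow> \<tau> (v + w) \<le> \<tau> v + \<tau> w) \<and>
     (\<forall>w\<ge>0. \<forall>X. (\<forall>k. X k \<ge> 0) \<longrightarrow> X \<longlonglongrightarrow> w \<longrightarrow>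
         ereal (\<tau> w) \<le> liminf (\<lambda>k. ereal (\<tau> (X k))))"

definition c0_fun :: "('a::euclidean_space \<Rightarrow> 'b::real_normed_vector) \<Rightarrow> bool" where
  "c0_fun \<phi> \<longleftrightarrow> continuous_on UNIV \<phi> \<and> (\<phi> \<longlongrightarrow> 0) at_infinity"

definition lipschitz1 :: "('a::euclidean_space \<Rightarrow> real) \<Rightarrow> bool" where
  "lipschitz1 f \<longleftrightarrow> (\<forall>x y. \<bar>f x - f y\<bar> \<le> dist x y)"

definition W1 :: "'a::euclidean_space measure \<Rightarrow> 'a measure \<Rightarrow> ereal" where
  "W1 \<mu>p \<mu>m = (SUP f \<in> {f. lipschitz1 f \<and> integrable \<mu>p f \<and> integrable \<mu>m f}.
                   ereal (integral\<^sup>L \<mu>p f - integral\<^sup>L \<mu>m f))"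

text \<open>A discrete finite mass sum a_i delta_{x_i} is represented by its (finitely supported,
  nonnegative) mass function x |-> mu({x}).\<close>

definition dm_support :: "('a \<Rightarrow> real) \<Rightarrow> 'a set" where
  "dm_support m = {x. m x \<noteq> 0}"

definition discrete_mass :: "('a \<Rightarrow> real) \<Rightarrow> bool" where
  "discrete_mass m \<longleftrightarrow> finite (dm_support m) \<and> (\<forall>x. m x \<ge> 0)"

definition dm_total :: "('a \<Rightarrow> real) \<Rightarrow> real" where
  "dm_total m = (\<Sum>x\<in>dm_support m. m x)"

definition dm_pair :: "('a \<Rightarrow> real) \<Rightarrow> ('a \<Rightarrow> real) \<Rightarrow> real" where
  "dm_pair m \<phi> = (\<Sum>x\<in>dm_support m. m x * \<phi> x)"

definition dm_weak_conv :: "(nat \<Rightarrow> 'a::euclidean_space \<Rightarrow> real) \<Rightarrow> 'a measure \<Rightarrow> bool" where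
  "dm_weak_conv m \<mu> \<longleftrightarrow>
     (\<forall>\<phi>::'a \<Rightarrow> real. c0_fun \<phi> \<longrightarrow> (\<lambda>k. dm_pair (m k) \<phi>) \<longlonglongrightarrow> integral\<^sup>L \<mu> \<phi>)"

text \<open>A discrete mass flux is a finite list of straight oriented edges (e+, e-, w(e)),
  with e+ the initial point, e- the final point, e+ \<noteq> e- and w(e) \<ge> 0.\<close>

type_synonym 'a flux_graph = "('a \<times> 'a \<times> real) list"

definition discrete_mass_flux ::
  "'a::euclidean_space flux_graph \<Rightarrow> ('a \<Rightarrow> real) \<Rightarrow> ('a \<Rightarrow> real) \<Rightarrow> bool" where
  "discrete_mass_flux G \<nu>p \<nu>m \<longleftrightarrow>
     discrete_mass \<nu>p \<and> discrete_mass \<nu>m \<and> dm_total \<nu>p = dm_total \<nu>m \<and>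
     (\<forall>(p, q, w) \<in> set G. p \<noteq> q \<and> w \<ge> 0) \<and>
     (\<forall>v. \<nu>p v + sum_list (map (\<lambda>(p, q, w). if q = v then w else 0) G)
        = \<nu>m v + sum_list (map (\<lambda>(p, q, w). if p = v then w else 0) G))"

text \<open>Pairing of the flux F_G = sum_e w(e) e^ H^1|e with a vector test function phi:
  integral over e of phi . e^ dH^1 = integral_0^1 phi(e+ + t(e- - e+)) . (e- - e+) dt.\<close>

definition flux_pair :: "'a::euclidean_space flux_graph \<Rightarrow> ('a \<Rightarrow> 'a) \<Rightarrow> real" where
  "flux_pair G \<phi> = sum_list (map (\<lambda>(p, q, w).
       w * integral {0..1} (\<lambda>t::real. \<phi> (p + t *\<^sub>R (q - p)) \<bullet> (q - p))) G)"

definition flux_cost :: "(real \<Rightarrow> real) \<Rightarrow> 'a::euclidean_space flux_graph \<Rightarrow> real" where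
  "flux_cost \<tau> G = sum_list (map (\<lambda>(p, q, w). \<tau> w * dist p q) G)"

text \<open>An R^n-valued finite Borel measure F is represented componentwise (w.r.t. the basis)
  by the Jordan decomposition F_i = F_i^+ - F_i^- into finite Borel measures.\<close>

type_synonym 'a vec_measure = "'a \<Rightarrow> 'a measure \<times> 'a measure"

definition is_vec_measure :: "'a::euclidean_space vec_measure \<Rightarrow> bool" where
  "is_vec_measure F \<longleftrightarrow> (\<forall>i\<in>Basis.
      finite_measure (fst (F i)) \<and> sets (fst (F i)) = sets borel \<and>
      finite_measure (snd (F i)) \<and> sets (snd (F i)) = sets borel)"

definition vm_pair :: "'a::euclidean_space vec_measure \<Rightarrow> ('a \<Rightarrow> 'a) \<Rightarrow> real" where
  "vm_pair F \<phi> = (\<Sum>i\<in>Basis. integral\<^sup>L (fst (F i)) (\<lambda>x. \<phi> x \<bullet> i)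
                             - integral\<^sup>L (snd (F i)) (\<lambda>x. \<phi> x \<bullet> i))"

definition flux_weak_conv :: "(nat \<Rightarrow> 'a::euclidean_space flux_graph) \<Rightarrow> 'a vec_measure \<Rightarrow> bool" where
  "flux_weak_conv G F \<longleftrightarrow>
     (\<forall>\<phi>::'a \<Rightarrow> 'a. c0_fun \<phi> \<longrightarrow> (\<lambda>k. flux_pair (G k) \<phi>) \<longlonglongrightarrow> vm_pair F \<phi>)"

definition J_tau :: "(real \<Rightarrow> real) \<Rightarrow> 'a::euclidean_space measure \<Rightarrow> 'a measure \<Rightarrow> 'a vec_measure \<Rightarrow> ereal" where
  "J_tau \<tau> \<mu>p \<mu>m F = Inf {liminf (\<lambda>k. ereal (flux_cost \<tau> (G k))) | G mp mm.
       (\<forall>k. discrete_mass_flux (G k) (mp k) (mm k)) \<and>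
       dm_weak_conv mp \<mu>p \<and> dm_weak_conv mm \<mu>m \<and> flux_weak_conv G F}"

definition d_tau :: "(real \<Rightarrow> real) \<Rightarrow> 'a::euclidean_space measure \<Rightarrow> 'a measure \<Rightarrow> ereal" where
  "d_tau \<tau> \<mu>p \<mu>m = (INF F \<in> {F. is_vec_measure F}. J_tau \<tau> \<mu>p \<mu>m F)"

definition prob_measure_Rn :: "'a::euclidean_space measure \<Rightarrow> bool" where
  "prob_measure_Rn \<mu> \<longleftrightarrow> prob_space \<mu> \<and> sets \<mu> = sets borel"

end

theory Submission
  imports Defs
begin

text \<open>Monotonicity and subadditivity give \<tau> w \<ge> c min w 2. For a discrete flux G from \<nu>+ to \<nu>-
  and a 2-Lipschitz g whose superlevel sets carry net mass at most 2, a discrete coarea argument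
  bounds the pairing of \<nu>+ - \<nu>- with g by the sum over edges of min (w e) 2 |g e+ - g e-|, hence
  by (2/c) J(G). Truncations of a 1-Lipschitz f vanish outside a ball, so the mass condition
  holds eventually along discrete masses converging weakly-* to probability measures. Letting the
  truncation radius tend to infinity and taking the supremum over f gives d_\<tau> \<ge> (c/2) W_1.\<close>

section \<open>Lower bound for transportation costs\<close>

lemma transportation_cost_mult_nat:
  assumes tc: "transportation_cost \<tau>" and w: "w \<ge> 0"
  shows "\<tau> (real n * w) \<le> real n * \<tau> w"
proof (induction n)
  case 0
  then show ?case using tc by (simp add: transportation_cost_def)
next
  case (Suc n)
  have "\<tau> (real (Suc n) * w) = \<tau> (real n * w + w)" by (simp add: algebra_simps)
  also have "\<dots> \<le> \<tau> (real n * w) + \<tau> w" using tc w by (simp add: transportation_cost_def)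
  also have "\<dots> \<le> real (Suc n) * \<tau> w" using Suc by (simp add: algebra_simps)
  finally show ?case .
qed

lemma transportation_cost_ge_min:
  assumes tc: "transportation_cost \<tau>" and K: "K > 0"
  shows "\<exists>c>0. \<forall>w\<ge>0. c * min w K \<le> \<tau> w"
proof (intro exI conjI allI impI)
  have mono: "\<And>v w. 0 \<le> v \<Longrightarrow> v \<le> w \<Longrightarrow> \<tau> v \<le> \<tau> w"
    using tc by (simp add: transportation_cost_def)
  have \<tau>K: "\<tau> K > 0" using tc K by (simp add: transportation_cost_def)
  then show "\<tau> K / (2 * K) > 0" using K by simp
  fix w :: real
  assume w: "w \<ge> 0"
  consider "w = 0" | "K \<le> w" | "0 < w" "w < K" using w by linarith
  then show "\<tau> K / (2 * K) * min w K \<le> \<tau> w"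
  proof cases
    case 1
    then show ?thesis using tc K by (simp add: transportation_cost_def)
  next
    case 2
    then show ?thesis using mono[of K w] \<tau>K K by (simp add: field_simps)
  next
    case 3
    \<comment> \<open>cover K by n = \<lceil>K / w\<rceil> \<le> 2 K / w copies of w\<close>
    define n where "n = nat \<lceil>K / w\<rceil>"
    have n: "K / w \<le> real n" "real n \<le> K / w + 1"
      using 3 by (auto simp: n_def intro: less_imp_le)
    have "\<tau> K \<le> \<tau> (real n * w)" using n(1) 3 K by (intro mono) (auto simp: field_simps)
    also have "\<dots> \<le> real n * \<tau> w" using transportation_cost_mult_nat[OF tc w] .
    also have "\<dots> \<le> 2 * K / w * \<tau> w"
      using n(2) 3 w tc by (intro mult_right_mono) (auto simp: field_simps transportation_cost_def)
    finally show ?thesis using 3 K by (simp add: field_simps)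
  qed
qed

section \<open>A discrete coarea inequality\<close>

lemma min_sum_le_sum_min:
  fixes x :: "'i \<Rightarrow> real"
  assumes "\<forall>i\<in>I. x i \<ge> 0" and "K \<ge> 0"
  shows "min (\<Sum>i\<in>I. x i) K \<le> (\<Sum>i\<in>I. min (x i) K)"
  using assms
proof (induction I rule: infinite_finite_induct)
  case (insert a I)
  have "0 \<le> (\<Sum>i\<in>I. x i)" "0 \<le> x a" using insert.prems by (auto intro: sum_nonneg)
  then have "min (x a + (\<Sum>i\<in>I. x i)) K \<le> min (x a) K + min (\<Sum>i\<in>I. x i) K"
    using \<open>K \<ge> 0\<close> by (simp add: min_def)
  then show ?case using insert by simp
qed simp_all

lemma two_lowest_levels:
  fixes g :: "'v \<Rightarrow> real"
  assumes V: "finite V" and levels: "card (g ` V) > 1"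
  obtains m m' where "m < m'" "m \<in> g ` V" "\<forall>v\<in>V. g v = m \<or> m' \<le> g v"
    and "(\<lambda>v. max (g v) m') ` V = g ` V - {m}"
proof -
  define m where "m = Min (g ` V)"
  define m' where "m' = Min (g ` V - {m})"
  have fin: "finite (g ` V)" using V by simp
  have "g ` V \<noteq> {}" using levels by auto
  then have m: "m \<in> g ` V" "\<forall>v\<in>V. m \<le> g v" using fin by (auto simp: m_def)
  have "g ` V - {m} \<noteq> {}"
  proof
    assume "g ` V - {m} = {}"
    then have "g ` V = {m}" using m(1) by auto
    then show False using levels by simp
  qed
  then have m': "m' \<in> g ` V - {m}" unfolding m'_def using fin by (intro Min_in) auto
  have above: "\<forall>v\<in>V. g v \<noteq> m \<longrightarrow> m' \<le> g v" unfolding m'_def using fin by auto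
  have "m < m'" using m m' by force
  moreover have "(\<lambda>v. max (g v) m') ` V = g ` V - {m}"
  proof
    show "(\<lambda>v. max (g v) m') ` V \<subseteq> g ` V - {m}"
      using m' above \<open>m < m'\<close> by (auto simp: max_def)
    show "g ` V - {m} \<subseteq> (\<lambda>v. max (g v) m') ` V"
    proof
      fix y assume "y \<in> g ` V - {m}"
      then obtain v where "v \<in> V" "y = g v" "g v \<noteq> m" by auto
      then show "y \<in> (\<lambda>v. max (g v) m') ` V" using above by (auto intro!: image_eqI[of _ _ v])
    qed
  qed
  ultimately show ?thesis using m(1) above by (intro that) auto
qed

lemma abs_diff_lift_lowest_level:
  fixes g :: "'v \<Rightarrow> real"
  assumes "m < m'" "\<forall>v\<in>V. g v = m \<or> m' \<le> g v" "p \<in> V" "q \<in> V"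
  shows "\<bar>g p - g q\<bar> = \<bar>max (g p) m' - max (g q) m'\<bar> + (m' - m) * of_bool ((m < g p) \<noteq> (m < g q))"
proof -
  have "g p = m \<or> m' \<le> g p" "g q = m \<or> m' \<le> g q" using assms(2-4) by auto
  then show ?thesis using assms(1) by (elim disjE) (auto simp: max_def abs_if)
qed

lemma cut_sum_le_capped_crossing:
  fixes d :: "'v \<Rightarrow> real" and P Q :: "'e \<Rightarrow> 'v"
  assumes W: "\<forall>e\<in>E. W e \<ge> 0" and K: "K \<ge> 0"
    and cut: "(\<Sum>v\<in>U. d v) = (\<Sum>e\<in>E. W e * (indicator U (P e) - indicator U (Q e)))"
    and bound: "(\<Sum>v\<in>U. d v) \<le> K"
  shows "(\<Sum>v\<in>U. d v) \<le> (\<Sum>e\<in>E. min (W e) K * of_bool ((P e \<in> U) \<noteq> (Q e \<in> U)))"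
proof -
  have "(\<Sum>v\<in>U. d v) \<le> (\<Sum>e\<in>E. W e * of_bool ((P e \<in> U) \<noteq> (Q e \<in> U)))"
    unfolding cut using W by (intro sum_mono) (auto simp: indicator_def)
  then have "(\<Sum>v\<in>U. d v) \<le> min (\<Sum>e\<in>E. W e * of_bool ((P e \<in> U) \<noteq> (Q e \<in> U))) K"
    using bound by simp
  also have "\<dots> \<le> (\<Sum>e\<in>E. min (W e * of_bool ((P e \<in> U) \<noteq> (Q e \<in> U))) K)"
    using W K by (intro min_sum_le_sum_min) auto
  also have "\<dots> = (\<Sum>e\<in>E. min (W e) K * of_bool ((P e \<in> U) \<noteq> (Q e \<in> U)))"
    using K by (intro sum.cong) auto
  finally show ?thesis .
qed

lemma sum_superlevel_lifted_le:
  fixes g d :: "'v \<Rightarrow> real"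
  assumes "(\<Sum>v\<in>V. d v) = 0" "K \<ge> 0" "\<And>t. (\<Sum>v\<in>{v\<in>V. t < g v}. d v) \<le> K"
  shows "(\<Sum>v\<in>{v\<in>V. t < max (g v) m'}. d v) \<le> K"
proof (cases "t < m'")
  case True
  then have "{v\<in>V. t < max (g v) m'} = V" by auto
  then show ?thesis using assms by simp
next
  case False
  then have "{v\<in>V. t < max (g v) m'} = {v\<in>V. t < g v}" by auto
  then show ?thesis using assms by simp
qed

lemma sum_mul_lift_lowest_level:
  fixes g d :: "'v \<Rightarrow> real"
  assumes V: "finite V" and dV: "(\<Sum>v\<in>V. d v) = 0"
    and levels: "m < m'" "\<forall>v\<in>V. g v = m \<or> m' \<le> g v"
  shows "(\<Sum>v\<in>V. g v * d v)
    = (\<Sum>v\<in>V. max (g v) m' * d v) + (m' - m) * (\<Sum>v\<in>{v\<in>V. m < g v}. d v)"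
proof -
  have "(\<Sum>v\<in>V. g v * d v) = (\<Sum>v\<in>V. max (g v) m' * d v - (m' - m) * d v
      + (m' - m) * (indicator {v\<in>V. m < g v} v * d v))"
    using levels by (intro sum.cong refl) (auto simp: algebra_simps max_def)
  then show ?thesis
    using dV V by (simp add: sum.distrib sum_subtractf sum_distrib_left[symmetric] Int_absorb1)
qed

text \<open>Here d is the divergence of the weighted graph (E, P, Q, W). The induction lifts the lowest
  level m of g to the next level m'; this changes the pairing by (m' - m) times the divergence of
  the superlevel set above m, which is at most K and is paid for by the edges leaving that set.\<close>

lemma divergence_pairing_le_capped_variation:
  fixes g d :: "'v \<Rightarrow> real" and P Q :: "'e \<Rightarrow> 'v"
  assumes V: "finite V" and PQ: "\<forall>e\<in>E. P e \<in> V \<and> Q e \<in> V"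
    and W: "\<forall>e\<in>E. W e \<ge> 0" and K: "K \<ge> 0"
    and cut: "\<And>S. S \<subseteq> V \<Longrightarrow> (\<Sum>v\<in>S. d v) = (\<Sum>e\<in>E. W e * (indicator S (P e) - indicator S (Q e)))"
    and superlevel: "\<And>t. (\<Sum>v\<in>{v\<in>V. t < g v}. d v) \<le> K"
  shows "(\<Sum>v\<in>V. g v * d v) \<le> (\<Sum>e\<in>E. min (W e) K * \<bar>g (P e) - g (Q e)\<bar>)"
  using superlevel
proof (induction "card (g ` V)" arbitrary: g rule: less_induct)
  case less
  have dV: "(\<Sum>v\<in>V. d v) = 0" using cut[of V] PQ by simp
  show ?case
  proof (cases "card (g ` V) > 1")
    case False
    then obtain m where "\<forall>v\<in>V. g v = m"
      by (metis V card_le_Suc0_iff_eq finite_imageI imageI not_less One_nat_def)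
    then have "(\<Sum>v\<in>V. g v * d v) = m * (\<Sum>v\<in>V. d v)" by (simp add: sum_distrib_left)
    then show ?thesis using dV W K by (simp add: sum_nonneg)
  next
    case True
    then obtain m m' where mm': "m < m'" "m \<in> g ` V" "\<forall>v\<in>V. g v = m \<or> m' \<le> g v"
      and img: "(\<lambda>v. max (g v) m') ` V = g ` V - {m}"
      using two_lowest_levels[OF V] by blast
    define g' where "g' v = max (g v) m'" for v
    define U where "U = {v\<in>V. m < g v}"
    have "card (g' ` V) < card (g ` V)"
      unfolding g'_def img using V mm'(2) True by simp
    then have IH: "(\<Sum>v\<in>V. g' v * d v) \<le> (\<Sum>e\<in>E. min (W e) K * \<bar>g' (P e) - g' (Q e)\<bar>)"
      using less.hyps sum_superlevel_lifted_le[OF dV K less.prems] unfolding g'_def by blast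
    have "(\<Sum>v\<in>V. g v * d v) = (\<Sum>v\<in>V. g' v * d v) + (m' - m) * (\<Sum>v\<in>U. d v)"
      unfolding g'_def U_def using sum_mul_lift_lowest_level[OF V dV mm'(1,3)] .
    also have "\<dots> \<le> (\<Sum>e\<in>E. min (W e) K * \<bar>g' (P e) - g' (Q e)\<bar>)
        + (m' - m) * (\<Sum>e\<in>E. min (W e) K * of_bool ((P e \<in> U) \<noteq> (Q e \<in> U)))"
      using IH W K cut less.prems mm'(1)
      by (intro add_mono mult_left_mono cut_sum_le_capped_crossing) (auto simp: U_def)
    also have "\<dots> = (\<Sum>e\<in>E. min (W e) K *
        (\<bar>g' (P e) - g' (Q e)\<bar> + (m' - m) * of_bool ((P e \<in> U) \<noteq> (Q e \<in> U))))"
      by (simp add: sum.distrib sum_distrib_left ring_distribs mult.left_commute)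
    also have "\<dots> = (\<Sum>e\<in>E. min (W e) K * \<bar>g (P e) - g (Q e)\<bar>)"
      using PQ abs_diff_lift_lowest_level[OF mm'(1,3)] by (intro sum.cong refl) (simp add: g'_def U_def)
    finally show ?thesis .
  qed
qed

definition edge_start :: "'a flux_graph \<Rightarrow> nat \<Rightarrow> 'a" where
  "edge_start G i = fst (G ! i)"

definition edge_end :: "'a flux_graph \<Rightarrow> nat \<Rightarrow> 'a" where
  "edge_end G i = fst (snd (G ! i))"

definition edge_weight :: "'a flux_graph \<Rightarrow> nat \<Rightarrow> real" where
  "edge_weight G i = snd (snd (G ! i))"

lemma nth_flux_graph: "G ! i = (edge_start G i, edge_end G i, edge_weight G i)"
  by (simp add: edge_start_def edge_end_def edge_weight_def)

lemma sum_list_map_flux_graph: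
  "sum_list (map (\<lambda>(p, q, w). h p q w) G) = (\<Sum>i<length G. h (edge_start G i) (edge_end G i) (edge_weight G i))"
  by (simp add: sum_list_sum_nth atLeast0LessThan nth_flux_graph)

lemma discrete_mass_flux_weight_nonneg:
  assumes "discrete_mass_flux G mp mm" "i < length G"
  shows "edge_weight G i \<ge> 0"
  using assms nth_mem[OF assms(2)] unfolding discrete_mass_flux_def nth_flux_graph by fastforce

text \<open>Summing the Kirchhoff balance over S, edges inside S cancel and only edges crossing
  the boundary of S remain.\<close>

lemma discrete_mass_flux_cut:
  assumes G: "discrete_mass_flux G mp mm" and S: "finite S"
  shows "(\<Sum>v\<in>S. mp v - mm v) = (\<Sum>i<length G. edge_weight G i *
           (indicator S (edge_start G i) - indicator S (edge_end G i)))"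
proof -
  let ?out = "\<lambda>v. \<Sum>i<length G. if edge_start G i = v then edge_weight G i else 0"
  let ?in = "\<lambda>v. \<Sum>i<length G. if edge_end G i = v then edge_weight G i else 0"
  have "mp v - mm v = ?out v - ?in v" for v
  proof -
    have "mp v + ?in v = mm v + ?out v"
      using G unfolding discrete_mass_flux_def sum_list_map_flux_graph by blast
    then show ?thesis by linarith
  qed
  then have "(\<Sum>v\<in>S. mp v - mm v) = (\<Sum>v\<in>S. ?out v) - (\<Sum>v\<in>S. ?in v)"
    by (simp add: sum_subtractf)
  also have "\<dots> = (\<Sum>i<length G. if edge_start G i \<in> S then edge_weight G i else 0)
      - (\<Sum>i<length G. if edge_end G i \<in> S then edge_weight G i else 0)"
    by (subst (1 2) sum.swap) (simp add: S)
  also have "\<dots> = (\<Sum>i<length G. edge_weight G i *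
      (indicator S (edge_start G i) - indicator S (edge_end G i)))"
    unfolding sum_subtractf[symmetric] by (intro sum.cong) (auto simp: indicator_def)
  finally show ?thesis .
qed

lemma dm_pair_eq_sum_superset:
  assumes "discrete_mass m" "dm_support m \<subseteq> V" "finite V"
  shows "dm_pair m h = (\<Sum>v\<in>V. m v * h v)"
  unfolding dm_pair_def
  by (rule sum.mono_neutral_left) (use assms in \<open>auto simp: dm_support_def\<close>)

lemma dm_pair_nonneg: "discrete_mass m \<Longrightarrow> \<forall>x. 0 \<le> \<phi> x \<Longrightarrow> 0 \<le> dm_pair m \<phi>"
  unfolding dm_pair_def discrete_mass_def by (simp add: sum_nonneg)

lemma sum_le_dm_pair:
  assumes m: "discrete_mass m" and V: "dm_support m \<subseteq> V" "finite V"
    and \<phi>: "\<forall>x. 0 \<le> \<phi> x" and B: "\<forall>v\<in>B. 1 \<le> \<phi> v" "B \<subseteq> V"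
  shows "(\<Sum>v\<in>B. m v) \<le> dm_pair m \<phi>"
proof -
  have m0: "\<forall>v. 0 \<le> m v" using m by (simp add: discrete_mass_def)
  have "(\<Sum>v\<in>B. m v) \<le> (\<Sum>v\<in>B. m v * \<phi> v)"
    using m0 B(1) by (intro sum_mono) (metis mult.right_neutral mult_left_mono)
  also have "\<dots> \<le> (\<Sum>v\<in>V. m v * \<phi> v)"
    using m0 \<phi> B(2) V(2) by (intro sum_mono2) auto
  finally show ?thesis using dm_pair_eq_sum_superset[OF m V] by simp
qed

text \<open>Superlevel sets of g above a negative level contain every vertex where g vanishes,
  so their complement lies in B; this is where the zero total divergence is used.\<close>

lemma sum_superlevel_le:
  fixes g mp mm :: "'v \<Rightarrow> real"
  assumes V: "finite V" and nonneg: "\<forall>v. 0 \<le> mp v" "\<forall>v. 0 \<le> mm v"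
    and balance: "(\<Sum>v\<in>V. mp v - mm v) = 0"
    and B: "{v\<in>V. g v \<noteq> 0} \<subseteq> B" "B \<subseteq> V" and mass: "(\<Sum>v\<in>B. mp v) \<le> K" "(\<Sum>v\<in>B. mm v) \<le> K"
  shows "(\<Sum>v\<in>{v\<in>V. t < g v}. mp v - mm v) \<le> K"
proof -
  let ?S = "{v\<in>V. t < g v}"
  have finB: "finite B" using V B(2) finite_subset by blast
  show ?thesis
  proof (cases "t \<ge> 0")
    case True
    then have "?S \<subseteq> B" using B(1) by auto
    have "(\<Sum>v\<in>?S. mp v - mm v) \<le> (\<Sum>v\<in>?S. mp v)" using nonneg by (intro sum_mono) auto
    also have "\<dots> \<le> (\<Sum>v\<in>B. mp v)" using \<open>?S \<subseteq> B\<close> finB nonneg by (intro sum_mono2) auto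
    finally show ?thesis using mass by simp
  next
    case False
    then have "V - ?S \<subseteq> B" using B(1) by auto
    have "(\<Sum>v\<in>?S. mp v - mm v) = - (\<Sum>v\<in>V - ?S. mp v - mm v)"
      using sum_diff[OF V, of ?S "\<lambda>v. mp v - mm v"] balance by auto
    also have "\<dots> \<le> (\<Sum>v\<in>V - ?S. mm v)" using nonneg by (simp add: sum_subtractf sum_nonneg)
    also have "\<dots> \<le> (\<Sum>v\<in>B. mm v)" using \<open>V - ?S \<subseteq> B\<close> finB nonneg by (intro sum_mono2) auto
    finally show ?thesis using mass by simp
  qed
qed

lemma dm_pair_diff_le_capped_variation:
  fixes G :: "'a::euclidean_space flux_graph"
  assumes G: "discrete_mass_flux G mp mm"
    and \<phi>: "\<forall>x. 0 \<le> \<phi> x" "\<forall>x. g x \<noteq> 0 \<longrightarrow> 1 \<le> \<phi> x"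
    and mass: "dm_pair mp \<phi> \<le> K" "dm_pair mm \<phi> \<le> K"
  shows "dm_pair mp g - dm_pair mm g
    \<le> (\<Sum>i<length G. min (edge_weight G i) K * \<bar>g (edge_start G i) - g (edge_end G i)\<bar>)"
proof -
  let ?P = "edge_start G" and ?Q = "edge_end G" and ?W = "edge_weight G" and ?E = "{..<length G}"
  have dmp: "discrete_mass mp" and dmm: "discrete_mass mm"
    using G by (auto simp: discrete_mass_flux_def)
  define V where "V = dm_support mp \<union> dm_support mm \<union> ?P ` ?E \<union> ?Q ` ?E"
  define B where "B = {v\<in>V. 1 \<le> \<phi> v}"
  have V: "finite V" using dmp dmm by (simp add: V_def discrete_mass_def)
  have PQ: "\<forall>i\<in>?E. ?P i \<in> V \<and> ?Q i \<in> V" and supp: "dm_support mp \<subseteq> V" "dm_support mm \<subseteq> V"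
    by (auto simp: V_def)
  have cut: "(\<Sum>v\<in>S. mp v - mm v) = (\<Sum>i\<in>?E. ?W i * (indicator S (?P i) - indicator S (?Q i)))"
    if "S \<subseteq> V" for S
    using discrete_mass_flux_cut[OF G finite_subset[OF that V]] by simp
  have superlevel: "(\<Sum>v\<in>{v\<in>V. t < g v}. mp v - mm v) \<le> K" for t
  proof (rule sum_superlevel_le[OF V])
    show "\<forall>v. 0 \<le> mp v" "\<forall>v. 0 \<le> mm v" using dmp dmm by (auto simp: discrete_mass_def)
    show "(\<Sum>v\<in>V. mp v - mm v) = 0" using cut[of V] PQ by simp
    show "{v\<in>V. g v \<noteq> 0} \<subseteq> B" "B \<subseteq> V" using \<phi>(2) by (auto simp: B_def)
    show "(\<Sum>v\<in>B. mp v) \<le> K" "(\<Sum>v\<in>B. mm v) \<le> K"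
      using sum_le_dm_pair[OF dmp supp(1) V \<phi>(1), of B] sum_le_dm_pair[OF dmm supp(2) V \<phi>(1), of B] mass
      by (auto simp: B_def)
  qed
  have "dm_pair mp g - dm_pair mm g = (\<Sum>v\<in>V. g v * (mp v - mm v))"
    using dm_pair_eq_sum_superset[OF dmp supp(1) V] dm_pair_eq_sum_superset[OF dmm supp(2) V]
    by (simp add: sum_subtractf[symmetric] algebra_simps)
  also have "\<dots> \<le> (\<Sum>i\<in>?E. min (?W i) K * \<bar>g (?P i) - g (?Q i)\<bar>)"
    using discrete_mass_flux_weight_nonneg[OF G] dm_pair_nonneg[OF dmp \<phi>(1)] mass(1)
    by (intro divergence_pairing_le_capped_variation[OF V PQ _ _ cut superlevel]) auto
  finally show ?thesis .
qed

lemma flux_cost_ge_pairing: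
  fixes G :: "'a::euclidean_space flux_graph"
  assumes c: "c > 0" "\<forall>w\<ge>0. c * min w K \<le> \<tau> w"
    and G: "discrete_mass_flux G mp mm"
    and lip: "L \<ge> 0" "\<forall>x y. \<bar>g x - g y\<bar> \<le> L * dist x y"
    and \<phi>: "\<forall>x. 0 \<le> \<phi> x" "\<forall>x. g x \<noteq> 0 \<longrightarrow> 1 \<le> \<phi> x"
    and mass: "dm_pair mp \<phi> \<le> K" "dm_pair mm \<phi> \<le> K"
  shows "c * (dm_pair mp g - dm_pair mm g) \<le> L * flux_cost \<tau> G"
proof -
  let ?P = "edge_start G" and ?Q = "edge_end G" and ?W = "edge_weight G" and ?E = "{..<length G}"
  have W: "\<forall>i\<in>?E. ?W i \<ge> 0" using discrete_mass_flux_weight_nonneg[OF G] by simp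
  have K: "K \<ge> 0"
    using G dm_pair_nonneg[OF _ \<phi>(1), of mp] mass(1) by (auto simp: discrete_mass_flux_def)
  have "c * (dm_pair mp g - dm_pair mm g) \<le> c * (\<Sum>i\<in>?E. min (?W i) K * \<bar>g (?P i) - g (?Q i)\<bar>)"
    using dm_pair_diff_le_capped_variation[OF G \<phi> mass] c(1) by (simp add: lessThan_def)
  also have "\<dots> = (\<Sum>i\<in>?E. (c * min (?W i) K) * \<bar>g (?P i) - g (?Q i)\<bar>)"
    by (simp add: sum_distrib_left mult.assoc)
  also have "\<dots> \<le> (\<Sum>i\<in>?E. \<tau> (?W i) * (L * dist (?P i) (?Q i)))"
  proof (intro sum_mono mult_mono)
    fix i assume "i \<in> ?E"
    then have "0 \<le> c * min (?W i) K" using c W K by auto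
    moreover show "c * min (?W i) K \<le> \<tau> (?W i)" using c W \<open>i \<in> ?E\<close> by auto
    ultimately show "0 \<le> \<tau> (?W i)" by linarith
  qed (use lip in auto)
  also have "\<dots> = L * flux_cost \<tau> G"
    by (simp add: flux_cost_def sum_list_map_flux_graph sum_distrib_left algebra_simps)
  finally show ?thesis .
qed

section \<open>Truncated Lipschitz functions\<close>

definition radial_cutoff :: "real \<Rightarrow> real \<Rightarrow> 'a::real_normed_vector \<Rightarrow> real" where
  "radial_cutoff a R x = max 0 (min 1 (a - norm x / R))"

definition truncation :: "real \<Rightarrow> ('a::real_normed_vector \<Rightarrow> real) \<Rightarrow> 'a \<Rightarrow> real" where
  "truncation R f x = clamp (-R) R (f x) * radial_cutoff 2 R x"

lemma abs_max_min_diff_le: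
  fixes a b u v :: real
  assumes "a \<le> b"
  shows "\<bar>max a (min b u) - max a (min b v)\<bar> \<le> \<bar>u - v\<bar>"
  using assms by (auto simp: max_def min_def abs_if)

lemma clamp_real: "a \<le> b \<Longrightarrow> clamp a b (u::real) = max a (min b u)"
  by (cases "u < a"; cases "u \<le> b") (simp_all add: clamp_def)

lemma abs_clamp_le_radius: "0 \<le> R \<Longrightarrow> \<bar>clamp (-R) R (u::real)\<bar> \<le> R"
  by (simp add: clamp_real[of "-R" R] abs_le_iff)

lemma abs_clamp_le: "0 \<le> R \<Longrightarrow> \<bar>clamp (-R) R (u::real)\<bar> \<le> \<bar>u\<bar>"
  by (simp add: clamp_real[of "-R" R] abs_le_iff) linarith

lemma radial_cutoff_nonneg [simp]: "0 \<le> radial_cutoff a R x"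
  and radial_cutoff_le_one [simp]: "radial_cutoff a R x \<le> 1"
  by (simp_all add: radial_cutoff_def)

lemma radial_cutoff_dist_le:
  assumes "R > 0"
  shows "\<bar>radial_cutoff a R x - radial_cutoff a R y\<bar> \<le> dist x y / R"
proof -
  have "\<bar>radial_cutoff a R x - radial_cutoff a R y\<bar> \<le> \<bar>(a - norm x / R) - (a - norm y / R)\<bar>"
    unfolding radial_cutoff_def by (rule abs_max_min_diff_le) simp
  also have "\<dots> = \<bar>norm x - norm y\<bar> / R"
    using assms by (simp add: diff_divide_distrib[symmetric] abs_minus_commute)
  also have "\<dots> \<le> dist x y / R"
    using assms norm_triangle_ineq3[of x y] by (simp add: dist_norm divide_right_mono)
  finally show ?thesis .
qed

lemma radial_cutoff_eq_zero: "R > 0 \<Longrightarrow> a * R \<le> norm x \<Longrightarrow> radial_cutoff a R x = 0"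
  by (simp add: radial_cutoff_def field_simps)

lemma radial_cutoff_eq_one: "R > 0 \<Longrightarrow> norm x \<le> (a - 1) * R \<Longrightarrow> radial_cutoff a R x = 1"
  by (simp add: radial_cutoff_def field_simps)

lemma continuous_on_radial_cutoff: "R \<noteq> 0 \<Longrightarrow> continuous_on UNIV (radial_cutoff a R)"
  unfolding radial_cutoff_def by (intro continuous_intros) auto

lemma c0_funI_vanishing_outside_ball:
  assumes "continuous_on UNIV \<phi>" and "\<And>x. r \<le> norm x \<Longrightarrow> \<phi> x = 0"
  shows "c0_fun \<phi>"
proof -
  have "eventually (\<lambda>x. \<phi> x = 0) at_infinity"
    unfolding eventually_at_infinity using assms(2) by blast
  then show ?thesis using assms(1) unfolding c0_fun_def by (simp add: tendsto_eventually)
qed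

lemma c0_fun_radial_cutoff: "R > 0 \<Longrightarrow> c0_fun (radial_cutoff a R :: 'a::euclidean_space \<Rightarrow> real)"
  by (rule c0_funI_vanishing_outside_ball) (auto intro: continuous_on_radial_cutoff radial_cutoff_eq_zero)

lemma lipschitz1_continuous_on: "lipschitz1 f \<Longrightarrow> continuous_on UNIV f"
  by (rule lipschitz_on_continuous_on[of 1])
    (auto intro!: lipschitz_onI simp: lipschitz1_def dist_real_def)

lemma c0_fun_truncation:
  fixes f :: "'a::euclidean_space \<Rightarrow> real"
  assumes "lipschitz1 f" and "R > 0"
  shows "c0_fun (truncation R f)"
proof (rule c0_funI_vanishing_outside_ball)
  show "continuous_on UNIV (truncation R f)"
    using lipschitz1_continuous_on[OF assms(1)] assms(2)
    by (simp add: truncation_def[abs_def] clamp_real) (intro continuous_intros continuous_on_radial_cutoff, auto)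
  show "truncation R f x = 0" if "2 * R \<le> norm x" for x
    using radial_cutoff_eq_zero[OF assms(2) that] by (simp add: truncation_def)
qed

text \<open>Clamping costs Lipschitz constant 1 and cutting off at scale R costs 1/R times
  the clamp bound R, whence the constant 2 independent of R.\<close>

lemma truncation_dist_le:
  assumes f: "lipschitz1 f" and R: "R > 0"
  shows "\<bar>truncation R f x - truncation R f y\<bar> \<le> 2 * dist x y"
proof -
  let ?c = "\<lambda>x. clamp (-R) R (f x)" and ?\<psi> = "radial_cutoff 2 R"
  have c: "\<bar>?c x - ?c y\<bar> \<le> dist x y"
    using dist_clamps_le_dist_args[of "-R" R "f x" "f y"] f
    by (auto simp: lipschitz1_def dist_real_def intro: order_trans)
  have "truncation R f x - truncation R f y = (?c x - ?c y) * ?\<psi> x + ?c y * (?\<psi> x - ?\<psi> y)"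
    by (simp add: truncation_def algebra_simps)
  also have "\<bar>\<dots>\<bar> \<le> \<bar>?c x - ?c y\<bar> * ?\<psi> x + \<bar>?c y\<bar> * \<bar>?\<psi> x - ?\<psi> y\<bar>"
    by (rule order_trans[OF abs_triangle_ineq]) (simp add: abs_mult)
  also have "\<dots> \<le> dist x y * 1 + R * (dist x y / R)"
    using c R abs_clamp_le_radius[of R "f y"] radial_cutoff_dist_le[OF R]
    by (intro add_mono mult_mono) auto
  finally show ?thesis using R by simp
qed

lemma truncation_abs_le: "R \<ge> 0 \<Longrightarrow> \<bar>truncation R f x\<bar> \<le> \<bar>f x\<bar>"
  unfolding truncation_def abs_mult
  by (rule order_trans[OF mult_right_le_one_le]) (simp_all add: abs_clamp_le)

lemma truncation_tendsto: "((\<lambda>R. truncation R f x) \<longlongrightarrow> f x) at_top"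
proof (rule tendsto_eventually)
  show "\<forall>\<^sub>F R in at_top. truncation R f x = f x"
    unfolding eventually_at_top_linorder
  proof (intro exI allI impI)
    fix R assume "\<bar>f x\<bar> + norm x + 1 \<le> R"
    then have R: "0 < R" "\<bar>f x\<bar> \<le> R" "norm x \<le> R"
      using norm_ge_zero[of x] abs_ge_zero[of "f x"] by linarith+
    then show "truncation R f x = f x"
      using radial_cutoff_eq_one[of R x 2] by (simp add: truncation_def clamp_real abs_le_iff)
  qed
qed

lemma radial_cutoff_eq_one_if_truncation_nonzero:
  assumes "R > 0" and "truncation R f x \<noteq> 0"
  shows "radial_cutoff 3 R x = 1"
proof -
  have "radial_cutoff 2 R x \<noteq> 0" using assms(2) by (auto simp: truncation_def)
  then have "norm x \<le> 2 * R" using radial_cutoff_eq_zero[OF assms(1), of 2 x] by linarith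
  then show ?thesis using radial_cutoff_eq_one[OF assms(1), of x 3] by simp
qed

section \<open>Passage to the limit\<close>

lemma measurable_continuous_on_sets_borel:
  assumes "sets \<mu> = sets borel" and "continuous_on UNIV h"
  shows "h \<in> borel_measurable \<mu>"
  using borel_measurable_continuous_onI[OF assms(2)] measurable_cong_sets[OF assms(1), of borel borel]
  by metis

lemma integral_radial_cutoff_le_one:
  fixes \<mu> :: "'a::euclidean_space measure"
  assumes \<mu>: "prob_measure_Rn \<mu>" and R: "R > 0"
  shows "integral\<^sup>L \<mu> (radial_cutoff a R) \<le> 1"
proof -
  interpret prob_space \<mu> using \<mu> by (simp add: prob_measure_Rn_def)
  have "radial_cutoff a R \<in> borel_measurable \<mu>"
    using \<mu> R by (auto simp: prob_measure_Rn_def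
        intro: measurable_continuous_on_sets_borel continuous_on_radial_cutoff)
  then have "integrable \<mu> (radial_cutoff a R)"
    by (intro integrable_const_bound[where B = 1]) auto
  then show ?thesis by (rule integral_le_const) simp
qed

lemma eventually_dm_pair_radial_cutoff_less:
  fixes \<mu> :: "'a::euclidean_space measure"
  assumes "prob_measure_Rn \<mu>" "dm_weak_conv m \<mu>" "R > 0" "1 < K"
  shows "eventually (\<lambda>k. dm_pair (m k) (radial_cutoff a R) < K) sequentially"
proof (rule order_tendstoD(2))
  show "(\<lambda>k. dm_pair (m k) (radial_cutoff a R)) \<longlonglongrightarrow> integral\<^sup>L \<mu> (radial_cutoff a R)"
    using assms(2) c0_fun_radial_cutoff[OF assms(3), of a] unfolding dm_weak_conv_def by blast
  show "integral\<^sup>L \<mu> (radial_cutoff a R) < K"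
    using integral_radial_cutoff_le_one[OF assms(1,3), of a] assms(4) by linarith
qed

text \<open>Weak-* convergence can only be tested against C_0 functions, hence the truncation.
  The cutoff of radius 3 R dominates the support of the truncation, and since the limit
  measures are probability measures it has mass below 2 for all large k.\<close>

lemma liminf_flux_cost_ge_truncation:
  fixes \<mu>p \<mu>m :: "'a::euclidean_space measure"
  assumes c: "c > 0" "\<forall>w\<ge>0. c * min w 2 \<le> \<tau> w"
    and \<mu>: "prob_measure_Rn \<mu>p" "prob_measure_Rn \<mu>m"
    and G: "\<forall>k. discrete_mass_flux (G k) (mp k) (mm k)"
    and conv: "dm_weak_conv mp \<mu>p" "dm_weak_conv mm \<mu>m"
    and f: "lipschitz1 f" and R: "R > 0"
  shows "ereal (c / 2 * (integral\<^sup>L \<mu>p (truncation R f) - integral\<^sup>L \<mu>m (truncation R f)))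
    \<le> liminf (\<lambda>k. ereal (flux_cost \<tau> (G k)))"
proof -
  let ?g = "truncation R f" and ?\<phi> = "radial_cutoff 3 R :: 'a \<Rightarrow> real"
  let ?pairing = "\<lambda>k. c / 2 * (dm_pair (mp k) ?g - dm_pair (mm k) ?g)"
  have "eventually (\<lambda>k. dm_pair (mp k) ?\<phi> < 2 \<and> dm_pair (mm k) ?\<phi> < 2) sequentially"
    using eventually_dm_pair_radial_cutoff_less[OF \<mu>(1) conv(1) R] eventually_dm_pair_radial_cutoff_less[OF \<mu>(2) conv(2) R]
    by (intro eventually_conj) simp_all
  then have "eventually (\<lambda>k. ereal (?pairing k) \<le> ereal (flux_cost \<tau> (G k))) sequentially"
  proof eventually_elim
    case (elim k)
    have "c * (dm_pair (mp k) ?g - dm_pair (mm k) ?g) \<le> 2 * flux_cost \<tau> (G k)"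
      using c G elim truncation_dist_le[OF f R] radial_cutoff_eq_one_if_truncation_nonzero[OF R, of f]
      by (intro flux_cost_ge_pairing[where \<phi> = ?\<phi>]) auto
    then show ?case by simp
  qed
  then have mono: "liminf (\<lambda>k. ereal (?pairing k)) \<le> liminf (\<lambda>k. ereal (flux_cost \<tau> (G k)))"
    by (rule Liminf_mono)
  have "(\<lambda>k. dm_pair (mp k) ?g) \<longlonglongrightarrow> integral\<^sup>L \<mu>p ?g"
    "(\<lambda>k. dm_pair (mm k) ?g) \<longlonglongrightarrow> integral\<^sup>L \<mu>m ?g"
    using conv c0_fun_truncation[OF f R] by (auto simp: dm_weak_conv_def)
  then have lim: "(\<lambda>k. ereal (?pairing k))
      \<longlonglongrightarrow> ereal (c / 2 * (integral\<^sup>L \<mu>p ?g - integral\<^sup>L \<mu>m ?g))"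
    by (intro tendsto_intros)
  show ?thesis using mono unfolding lim_imp_Liminf[OF trivial_limit_sequentially lim] .
qed

lemma integral_truncation_tendsto:
  fixes \<mu> :: "'a::euclidean_space measure"
  assumes \<mu>: "prob_measure_Rn \<mu>" and f: "lipschitz1 f" "integrable \<mu> f"
  shows "(\<lambda>j. integral\<^sup>L \<mu> (truncation (Suc j) f)) \<longlonglongrightarrow> integral\<^sup>L \<mu> f"
proof (rule integral_dominated_convergence[where w = "\<lambda>x. \<bar>f x\<bar>"])
  show "truncation (Suc j) f \<in> borel_measurable \<mu>" for j
    using \<mu> c0_fun_truncation[OF f(1), of "Suc j"]
    by (auto simp: prob_measure_Rn_def c0_fun_def intro: measurable_continuous_on_sets_borel)
  show "AE x in \<mu>. (\<lambda>j. truncation (Suc j) f x) \<longlonglongrightarrow> f x"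
    using filterlim_compose[OF truncation_tendsto filterlim_real_sequentially]
    by (intro AE_I2) (rule LIMSEQ_Suc)
  show "AE x in \<mu>. norm (truncation (Suc j) f x) \<le> \<bar>f x\<bar>" for j
    using truncation_abs_le[of "Suc j" f] by simp
qed (use f in auto)

lemma liminf_flux_cost_ge_lipschitz_pairing:
  fixes \<mu>p \<mu>m :: "'a::euclidean_space measure"
  assumes c: "c > 0" "\<forall>w\<ge>0. c * min w 2 \<le> \<tau> w"
    and \<mu>: "prob_measure_Rn \<mu>p" "prob_measure_Rn \<mu>m"
    and G: "\<forall>k. discrete_mass_flux (G k) (mp k) (mm k)"
    and conv: "dm_weak_conv mp \<mu>p" "dm_weak_conv mm \<mu>m"
    and f: "lipschitz1 f" "integrable \<mu>p f" "integrable \<mu>m f"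
  shows "ereal (c / 2 * (integral\<^sup>L \<mu>p f - integral\<^sup>L \<mu>m f)) \<le> liminf (\<lambda>k. ereal (flux_cost \<tau> (G k)))"
proof (rule LIMSEQ_le_const2)
  show "(\<lambda>j. ereal (c / 2 * (integral\<^sup>L \<mu>p (truncation (Suc j) f) - integral\<^sup>L \<mu>m (truncation (Suc j) f))))
      \<longlonglongrightarrow> ereal (c / 2 * (integral\<^sup>L \<mu>p f - integral\<^sup>L \<mu>m f))"
    using integral_truncation_tendsto[OF \<mu>(1) f(1,2)] integral_truncation_tendsto[OF \<mu>(2) f(1,3)]
    by (intro tendsto_intros)
  show "\<exists>N. \<forall>j\<ge>N. ereal (c / 2 * (integral\<^sup>L \<mu>p (truncation (Suc j) f) - integral\<^sup>L \<mu>m (truncation (Suc j) f)))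
      \<le> liminf (\<lambda>k. ereal (flux_cost \<tau> (G k)))"
    using liminf_flux_cost_ge_truncation[OF c \<mu> G conv f(1)] by auto
qed

lemma liminf_flux_cost_ge_W1:
  fixes \<mu>p \<mu>m :: "'a::euclidean_space measure"
  assumes c: "c > 0" "\<forall>w\<ge>0. c * min w 2 \<le> \<tau> w"
    and \<mu>: "prob_measure_Rn \<mu>p" "prob_measure_Rn \<mu>m"
    and G: "\<forall>k. discrete_mass_flux (G k) (mp k) (mm k)"
    and conv: "dm_weak_conv mp \<mu>p" "dm_weak_conv mm \<mu>m"
  shows "ereal (c / 2) * W1 \<mu>p \<mu>m \<le> liminf (\<lambda>k. ereal (flux_cost \<tau> (G k)))"
proof -
  let ?A = "{f. lipschitz1 f \<and> integrable \<mu>p f \<and> integrable \<mu>m f}"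
  have "(\<lambda>_. 0) \<in> ?A" by (simp add: lipschitz1_def)
  then have "ereal (c / 2) * W1 \<mu>p \<mu>m
      = (SUP f\<in>?A. ereal (c / 2 * (integral\<^sup>L \<mu>p f - integral\<^sup>L \<mu>m f)))"
    unfolding W1_def
    using Sup_ereal_mult_left'[of ?A "c / 2" "\<lambda>f. ereal (integral\<^sup>L \<mu>p f - integral\<^sup>L \<mu>m f)"] c(1)
    by auto
  also have "\<dots> \<le> liminf (\<lambda>k. ereal (flux_cost \<tau> (G k)))"
    using liminf_flux_cost_ge_lipschitz_pairing[OF c \<mu> G conv] by (auto intro: SUP_least)
  finally show ?thesis .
qed

theorem mainTheorem18:
  fixes \<tau> :: "real \<Rightarrow> real"
  assumes "transportation_cost \<tau>"
  shows "\<exists>c::real. c > 0 \<and>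
           (\<forall>\<mu>p \<mu>m :: 'a::euclidean_space measure.
              prob_measure_Rn \<mu>p \<longrightarrow> prob_measure_Rn \<mu>m \<longrightarrow>
              d_tau \<tau> \<mu>p \<mu>m \<ge> ereal c * W1 \<mu>p \<mu>m)"
proof -
  obtain c where c: "c > 0" "\<forall>w\<ge>0. c * min w 2 \<le> \<tau> w"
    using transportation_cost_ge_min[OF assms, of 2] by auto
  have "ereal (c / 2) * W1 \<mu>p \<mu>m \<le> d_tau \<tau> \<mu>p \<mu>m"
    if "prob_measure_Rn \<mu>p" "prob_measure_Rn \<mu>m" for \<mu>p \<mu>m :: "'a measure"
    unfolding d_tau_def J_tau_def
    using liminf_flux_cost_ge_W1[OF c that] by (fastforce intro!: INF_greatest Inf_greatest)
  then show ?thesis using c(1) by (intro exI[of _ "c / 2"]) auto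
qed

end
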